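(* Let $G=(V,E)$ be a strongly biconnected directed graph, and let $G^{eb}$ be the undirected simple graph with vertex set $V$ in which distinct vertices $x,y$ are adjacent if and only if $x \overset{e}{\leftrightsquigarrow} y$. Then the $2$-edge-biconnected blocks of $G$ are exactly the vertex sets of the blocks (maximal biconnected subgraphs, where a single edge counts as a block) of $G^{eb}$ that have at least $2$ vertices. In particular, if $G$ has no b-bridges and $|V|\ge 2$, then $V$ is the unique $2$-edge-biconnected block of $G$.
   Context: All graphs are finite. A directed graph $H$ is strongly biconnected if $H$ is strongly connected and its underlying undirected graph is biconnected. A strongly biconnected component of a directed graph $H=(W,F)$ is a maximal vertex subset $C\subseteq W$ such that the induced subgraph $H[C]$ is strongly biconnected. For a strongly biconnected directed graph $G=(V,E)$ and an edge $b\in E$, $G\setminus\{b\}=(V,E\setminus\{b\})$. An edge $b$ of $G$ is a b-bridge if $G\setminus\{b\}$ is not strongly biconnected. For distinct $x,y\in V$, write $x \overset{e}{\leftrightsquigarrow} y$ if for every edge $b\in E$ there is a strongly biconnected component of $G\setminus\{b\}$ containing both $x$ and $y$. A $2$-edge-biconnected block of $G$ is a maximal vertex subset $U\subseteq V$ with $|U|>1$ such that $x \overset{e}{\leftrightsquigarrow} y$ for all distinct $x,y\in U$. *)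

theory Defs
  imports Main
begin

text \<open>All connectivity notions are taken inside the induced subgraph on the given vertex set.\<close>

definition uconnected :: "'a set \<Rightarrow> ('a \<times> 'a) set \<Rightarrow> bool" where
  "uconnected W R \<longleftrightarrow>
     (\<forall>x\<in>W. \<forall>y\<in>W. (x, y) \<in> ((R \<union> R\<inverse>) \<inter> (W \<times> W))\<^sup>*)"

text \<open>Biconnected: connected and without articulation points (a single edge, i.e. two
  adjacent vertices, counts as biconnected).\<close>
definition ubiconnected :: "'a set \<Rightarrow> ('a \<times> 'a) set \<Rightarrow> bool" where
  "ubiconnected W R \<longleftrightarrow> uconnected W R \<and> (\<forall>v\<in>W. uconnected (W - {v}) R)"

definition ublock :: "'a set \<Rightarrow> ('a \<times> 'a) set \<Rightarrow> 'a set \<Rightarrow> bool" where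
  "ublock W R U \<longleftrightarrow> U \<subseteq> W \<and> ubiconnected U R \<and>
     (\<forall>U'. U \<subset> U' \<and> U' \<subseteq> W \<longrightarrow> \<not> ubiconnected U' R)"

definition strongly_connected :: "'a set \<Rightarrow> ('a \<times> 'a) set \<Rightarrow> bool" where
  "strongly_connected W F \<longleftrightarrow> (\<forall>x\<in>W. \<forall>y\<in>W. (x, y) \<in> (F \<inter> (W \<times> W))\<^sup>*)"

definition strongly_biconnected :: "'a set \<Rightarrow> ('a \<times> 'a) set \<Rightarrow> bool" where
  "strongly_biconnected W F \<longleftrightarrow> strongly_connected W F \<and> ubiconnected W F"

definition sb_component :: "'a set \<Rightarrow> ('a \<times> 'a) set \<Rightarrow> 'a set \<Rightarrow> bool" where
  "sb_component W F C \<longleftrightarrow> C \<subseteq> W \<and> strongly_biconnected C (F \<inter> (C \<times> C)) \<and>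
     (\<forall>D. C \<subset> D \<and> D \<subseteq> W \<longrightarrow> \<not> strongly_biconnected D (F \<inter> (D \<times> D)))"

definition b_bridge :: "'a set \<Rightarrow> ('a \<times> 'a) set \<Rightarrow> 'a \<times> 'a \<Rightarrow> bool" where
  "b_bridge V E b \<longleftrightarrow> b \<in> E \<and> \<not> strongly_biconnected V (E - {b})"

definition eb_rel :: "'a set \<Rightarrow> ('a \<times> 'a) set \<Rightarrow> 'a \<Rightarrow> 'a \<Rightarrow> bool" where
  "eb_rel V E x y \<longleftrightarrow> x \<in> V \<and> y \<in> V \<and> x \<noteq> y \<and>
     (\<forall>b\<in>E. \<exists>C. sb_component V (E - {b}) C \<and> x \<in> C \<and> y \<in> C)"

definition two_eb_block :: "'a set \<Rightarrow> ('a \<times> 'a) set \<Rightarrow> 'a set \<Rightarrow> bool" where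
  "two_eb_block V E U \<longleftrightarrow> U \<subseteq> V \<and> card U > 1 \<and>
     (\<forall>x\<in>U. \<forall>y\<in>U. x \<noteq> y \<longrightarrow> eb_rel V E x y) \<and>
     (\<forall>U'. U \<subset> U' \<and> U' \<subseteq> V \<longrightarrow> \<not> (\<forall>x\<in>U'. \<forall>y\<in>U'. x \<noteq> y \<longrightarrow> eb_rel V E x y))"

definition Geb :: "'a set \<Rightarrow> ('a \<times> 'a) set \<Rightarrow> ('a \<times> 'a) set" where
  "Geb V E = {(x, y). eb_rel V E x y}"

end

theory Submission
  imports Defs
begin

text \<open>If U is biconnected in G^eb, then for every edge b the edges of G^eb inside U lie in
  strongly biconnected components of G - b that each meet U in two vertices; their union is
  again strongly biconnected, because both strong connectivity and the connectivity after
  deleting a vertex propagate along the (biconnected) edge structure of U. Hence U lies in a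
  single component for every b, i.e. U is a clique of G^eb. Conversely cliques are
  biconnected, so the biconnected vertex sets of G^eb inside V are exactly its cliques, and
  maximal ones of size at least 2 are precisely the 2-edge-biconnected blocks.\<close>

definition rel_connected :: "('a \<times> 'a) set \<Rightarrow> 'a set \<Rightarrow> bool" where
  "rel_connected S W \<longleftrightarrow> (\<forall>x\<in>W. \<forall>y\<in>W. (x, y) \<in> (S \<inter> W \<times> W)\<^sup>*)"

lemma strongly_connected_iff_rel_connected: "strongly_connected W F \<longleftrightarrow> rel_connected F W"
  unfolding strongly_connected_def rel_connected_def ..

lemma uconnected_iff_rel_connected: "uconnected W R \<longleftrightarrow> rel_connected (R \<union> R\<inverse>) W"
  unfolding uconnected_def rel_connected_def ..

lemma strongly_biconnected_restrict:
  "strongly_biconnected C (F \<inter> C \<times> C) \<longleftrightarrow> strongly_biconnected C F"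
proof -
  have "\<And>W. W \<subseteq> C \<Longrightarrow> ((F \<inter> C \<times> C) \<union> (F \<inter> C \<times> C)\<inverse>) \<inter> W \<times> W = (F \<union> F\<inverse>) \<inter> W \<times> W"
    by auto
  moreover have "(F \<inter> C \<times> C) \<inter> C \<times> C = F \<inter> C \<times> C" by auto
  ultimately show ?thesis
    unfolding strongly_biconnected_def strongly_connected_def ubiconnected_def uconnected_def
    by simp
qed

lemma sb_component_iff:
  "sb_component V F C \<longleftrightarrow> C \<subseteq> V \<and> strongly_biconnected C F \<and>
     (\<forall>D. C \<subset> D \<and> D \<subseteq> V \<longrightarrow> \<not> strongly_biconnected D F)"
  unfolding sb_component_def strongly_biconnected_restrict ..

lemma ubiconnected_imp_uconnected_Diff:
  assumes "ubiconnected W R"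
  shows "uconnected (W - {v}) R"
proof (cases "v \<in> W")
  case False
  then have "W - {v} = W" by blast
  then show ?thesis using assms unfolding ubiconnected_def by simp
qed (use assms in \<open>auto simp: ubiconnected_def\<close>)

lemma exists_sb_component_superset:
  assumes "finite V" "D \<subseteq> V" "strongly_biconnected D F"
  obtains C where "sb_component V F C" "D \<subseteq> C"
proof -
  define S where "S = {D'. D \<subseteq> D' \<and> D' \<subseteq> V \<and> strongly_biconnected D' F}"
  have "finite S" unfolding S_def using assms(1) by (auto intro: finite_subset[of _ "Pow V"])
  moreover have "D \<in> S" using assms unfolding S_def by auto
  ultimately obtain C where C: "C \<in> S" "\<And>D'. D' \<in> S \<Longrightarrow> C \<subseteq> D' \<Longrightarrow> C = D'"
    using finite_has_maximal2 by metis
  have "sb_component V F C"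
    unfolding sb_component_iff using C unfolding S_def by blast
  with C(1) show ?thesis using that unfolding S_def by blast
qed

lemma rel_connected_Union:
  assumes conn: "\<And>C. C \<in> P \<Longrightarrow> rel_connected S C"
    and U: "uconnected U R"
    and cover: "\<And>q q'. (q, q') \<in> R \<Longrightarrow> q \<in> U \<Longrightarrow> q' \<in> U \<Longrightarrow> \<exists>C\<in>P. q \<in> C \<and> q' \<in> C"
    and meet: "\<And>C. C \<in> P \<Longrightarrow> C \<inter> U \<noteq> {}"
  shows "rel_connected S (\<Union>P)"
proof -
  let ?T = "(S \<inter> \<Union>P \<times> \<Union>P)\<^sup>*"
  have inside: "(a, b) \<in> ?T" if "C \<in> P" "a \<in> C" "b \<in> C" for C a b
  proof -
    have "(a, b) \<in> (S \<inter> C \<times> C)\<^sup>*" using conn[OF that(1)] that unfolding rel_connected_def by blast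
    moreover have "S \<inter> C \<times> C \<subseteq> S \<inter> \<Union>P \<times> \<Union>P" using that(1) by blast
    ultimately show ?thesis using rtrancl_mono by blast
  qed
  have along_U: "(u, u') \<in> ?T" if "u \<in> U" "u' \<in> U" for u u'
  proof -
    have "(u, u') \<in> ((R \<union> R\<inverse>) \<inter> U \<times> U)\<^sup>*" using U that unfolding uconnected_def by blast
    then show ?thesis
    proof (induction rule: rtrancl_induct)
      case (step q q')
      then obtain C where "C \<in> P" "q \<in> C" "q' \<in> C" using cover by blast
      then show ?case using step.IH inside rtrancl_trans by metis
    qed simp
  qed
  show ?thesis unfolding rel_connected_def
  proof (intro ballI)
    fix a b assume "a \<in> \<Union>P" "b \<in> \<Union>P"
    then obtain C C' where "C \<in> P" "a \<in> C" "C' \<in> P" "b \<in> C'" by blast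
    moreover obtain u u' where "u \<in> C \<inter> U" "u' \<in> C' \<inter> U" using meet calculation by blast
    ultimately show "(a, b) \<in> ?T" using inside along_U rtrancl_trans by (metis IntD1 IntD2)
  qed
qed

lemma strongly_biconnected_Union:
  assumes sb: "\<And>C. C \<in> P \<Longrightarrow> strongly_biconnected C F"
    and U: "ubiconnected U R"
    and cover: "\<And>q q'. (q, q') \<in> R \<Longrightarrow> q \<in> U \<Longrightarrow> q' \<in> U \<Longrightarrow> \<exists>C\<in>P. q \<in> C \<and> q' \<in> C"
    and two: "\<And>C. C \<in> P \<Longrightarrow> \<exists>a\<in>C \<inter> U. \<exists>b\<in>C \<inter> U. a \<noteq> b"
  shows "strongly_biconnected (\<Union>P) F"
proof -
  have meet: "C \<inter> U \<noteq> {}" if "C \<in> P" for C using two[OF that] by blast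
  have "uconnected U R" using U unfolding ubiconnected_def by blast
  then have "rel_connected S (\<Union>P)" if "\<And>C. C \<in> P \<Longrightarrow> rel_connected S C" for S
    using rel_connected_Union[OF that _ cover meet] by blast
  then have "strongly_connected (\<Union>P) F" "uconnected (\<Union>P) F"
    using sb unfolding strongly_connected_iff_rel_connected uconnected_iff_rel_connected
      strongly_biconnected_def ubiconnected_def by auto
  moreover have "uconnected (\<Union>P - {v}) F" for v
  proof -
    let ?P = "(\<lambda>C. C - {v}) ` P"
    have "\<Union>P - {v} = \<Union>?P" by blast
    moreover have "rel_connected (F \<union> F\<inverse>) (\<Union>?P)"
    proof (rule rel_connected_Union[where U = "U - {v}" and R = R])
      show "rel_connected (F \<union> F\<inverse>) C" if "C \<in> ?P" for C
        using that sb[THEN strongly_biconnected_def[THEN iffD1], THEN conjunct2,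
            THEN ubiconnected_imp_uconnected_Diff]
        unfolding uconnected_iff_rel_connected by blast
      show "uconnected (U - {v}) R" using U by (rule ubiconnected_imp_uconnected_Diff)
      show "\<exists>C\<in>?P. q \<in> C \<and> q' \<in> C" if qq: "(q, q') \<in> R" "q \<in> U - {v}" "q' \<in> U - {v}" for q q'
      proof -
        obtain C where "C \<in> P" "q \<in> C" "q' \<in> C" using cover qq by blast
        then have "C - {v} \<in> ?P" "q \<in> C - {v}" "q' \<in> C - {v}" using qq(2,3) by auto
        then show ?thesis by blast
      qed
      show "C \<inter> (U - {v}) \<noteq> {}" if C: "C \<in> ?P" for C
      proof -
        obtain D where D: "D \<in> P" "C = D - {v}" using C by blast
        obtain a b where "a \<in> D \<inter> U" "b \<in> D \<inter> U" "a \<noteq> b" using two[OF D(1)] by blast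
        then show ?thesis using D(2) by (cases "a = v") auto
      qed
    qed
    ultimately show ?thesis unfolding uconnected_iff_rel_connected by simp
  qed
  ultimately show ?thesis unfolding strongly_biconnected_def ubiconnected_def by blast
qed

lemma ubiconnected_subset_sb_component:
  assumes "finite V" "U \<subseteq> V" and U: "ubiconnected U R"
    and "x \<in> U" "y \<in> U" "x \<noteq> y"
    and edges: "\<And>a b. (a, b) \<in> R \<Longrightarrow> a \<in> U \<Longrightarrow> b \<in> U \<Longrightarrow>
      a \<noteq> b \<and> (\<exists>C. sb_component V F C \<and> a \<in> C \<and> b \<in> C)"
  obtains C where "sb_component V F C" "U \<subseteq> C"
proof -
  define P where "P = {C. sb_component V F C \<and> (\<exists>a\<in>C \<inter> U. \<exists>b\<in>C \<inter> U. a \<noteq> b)}"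
  have cover: "\<exists>C\<in>P. q \<in> C \<and> q' \<in> C" if "(q, q') \<in> R" "q \<in> U" "q' \<in> U" for q q'
    using edges[OF that] that(2,3) unfolding P_def by blast
  have "strongly_biconnected (\<Union>P) F"
    by (rule strongly_biconnected_Union[OF _ U cover]) (auto simp: P_def sb_component_iff)
  moreover have "\<Union>P \<subseteq> V" unfolding P_def sb_component_iff by blast
  ultimately obtain C where C: "sb_component V F C" "\<Union>P \<subseteq> C"
    using exists_sb_component_superset \<open>finite V\<close> by blast
  have "a \<in> \<Union>P" if a: "a \<in> U" for a
  proof -
    obtain c where c: "c \<in> U" "c \<noteq> a" using \<open>x \<in> U\<close> \<open>y \<in> U\<close> \<open>x \<noteq> y\<close> by blast
    have "(a, c) \<in> ((R \<union> R\<inverse>) \<inter> U \<times> U)\<^sup>*"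
      using U a c unfolding ubiconnected_def uconnected_def by blast
    then obtain a' where "(a, a') \<in> (R \<union> R\<inverse>) \<inter> U \<times> U"
      using c(2) by (metis converse_rtranclE)
    then show ?thesis using cover by blast
  qed
  with C show ?thesis using that by blast
qed

lemma eb_clique_uconnected:
  assumes "\<forall>x\<in>U. \<forall>y\<in>U. x \<noteq> y \<longrightarrow> eb_rel V E x y" "W \<subseteq> U"
  shows "uconnected W (Geb V E)"
  unfolding uconnected_def
proof (intro ballI)
  fix a b assume "a \<in> W" "b \<in> W"
  then have "a = b \<or> (a, b) \<in> (Geb V E \<union> (Geb V E)\<inverse>) \<inter> W \<times> W"
    using assms unfolding Geb_def by auto
  then show "(a, b) \<in> ((Geb V E \<union> (Geb V E)\<inverse>) \<inter> W \<times> W)\<^sup>*" by auto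
qed

lemma ubiconnected_Geb_iff_eb_clique:
  assumes "finite V" "U \<subseteq> V"
  shows "ubiconnected U (Geb V E) \<longleftrightarrow> (\<forall>x\<in>U. \<forall>y\<in>U. x \<noteq> y \<longrightarrow> eb_rel V E x y)"
proof
  assume U: "ubiconnected U (Geb V E)"
  show "\<forall>x\<in>U. \<forall>y\<in>U. x \<noteq> y \<longrightarrow> eb_rel V E x y"
  proof (intro ballI impI)
    fix x y assume xy: "x \<in> U" "y \<in> U" "x \<noteq> y"
    have "\<exists>C. sb_component V (E - {b}) C \<and> x \<in> C \<and> y \<in> C" if b: "b \<in> E" for b
    proof -
      have edges: "a \<noteq> c \<and> (\<exists>C. sb_component V (E - {b}) C \<and> a \<in> C \<and> c \<in> C)"
        if "(a, c) \<in> Geb V E" for a c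
        using that b unfolding Geb_def eb_rel_def by auto
      obtain C where "sb_component V (E - {b}) C" "U \<subseteq> C"
        by (rule ubiconnected_subset_sb_component[OF assms U xy edges])
      then show ?thesis using xy(1,2) by blast
    qed
    then show "eb_rel V E x y" unfolding eb_rel_def using xy assms(2) by blast
  qed
next
  assume "\<forall>x\<in>U. \<forall>y\<in>U. x \<noteq> y \<longrightarrow> eb_rel V E x y"
  then show "ubiconnected U (Geb V E)"
    unfolding ubiconnected_def using eb_clique_uconnected by blast
qed

lemma two_eb_block_iff_ublock:
  assumes "finite V"
  shows "two_eb_block V E U \<longleftrightarrow> ublock V (Geb V E) U \<and> card U \<ge> 2"
proof (cases "U \<subseteq> V")
  case True
  then show ?thesis
    using ubiconnected_Geb_iff_eb_clique[OF assms] unfolding two_eb_block_def ublock_def by auto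
qed (simp add: two_eb_block_def ublock_def)

lemma two_eb_block_no_b_bridge:
  assumes "\<not> (\<exists>b. b_bridge V E b)" "card V \<ge> 2"
  shows "two_eb_block V E U \<longleftrightarrow> U = V"
proof -
  have "sb_component V (E - {b}) V" if "b \<in> E" for b
  proof -
    have "strongly_biconnected V (E - {b})" using assms(1) that unfolding b_bridge_def by blast
    then show ?thesis unfolding sb_component_iff by blast
  qed
  then have clique: "\<forall>x\<in>V. \<forall>y\<in>V. x \<noteq> y \<longrightarrow> eb_rel V E x y"
    unfolding eb_rel_def by blast
  show ?thesis
  proof
    assume "two_eb_block V E U"
    then show "U = V" using clique unfolding two_eb_block_def by blast
  qed (use clique assms(2) in \<open>auto simp: two_eb_block_def\<close>)
qed

theorem mainTheorem4:
  fixes V :: "'a set" and E :: "('a \<times> 'a) set"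
  assumes "finite V" and "E \<subseteq> V \<times> V" and "strongly_biconnected V E"
  shows "{U. two_eb_block V E U} = {U. ublock V (Geb V E) U \<and> card U \<ge> 2} \<and>
         ((\<not> (\<exists>b. b_bridge V E b)) \<and> card V \<ge> 2 \<longrightarrow> {U. two_eb_block V E U} = {V})"
proof (intro conjI impI)
  show "{U. two_eb_block V E U} = {U. ublock V (Geb V E) U \<and> card U \<ge> 2}"
    by (simp add: two_eb_block_iff_ublock[OF assms(1)])
next
  assume "\<not> (\<exists>b. b_bridge V E b) \<and> card V \<ge> 2"
  then show "{U. two_eb_block V E U} = {V}"
    by (simp add: two_eb_block_no_b_bridge)
qed

end
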